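(* Let $a\in\mathbb{R}$ and $\gamma>0$, and assume \[ P=\tfrac12(1-\gamma^2a^2)+\sqrt{\gamma^2(-1+\gamma^2)+(\gamma^2a^2-1)^2/4}>1. \] Assume further the curvature condition $P>2\gamma-1$ and the strong negativity condition \[ (P+2\gamma^2-1)\left(P-1-2\sqrt{\gamma^2-P}\right)^2\ge (P-1)\left((P+1)^2-4\gamma^2\right). \] Then the closed-loop system of $x(t+1)=ax(t)+bu(t)+w(t)$, $x(0)=x_0$, $y(t)=x(t)+v(t)$ with unknown $b\in\{-1,1\}$, controlled by the certainty-equivalence dead-beat controller (defined in the context), has gain from $(w,v)$ to $x$ bounded above by $\gamma$; that is, for both $b\in\{-1,1\}$, all $T\ge 0$, all real sequences $w,v$ and all $x_0\in\mathbb{R}$, \[ \sum_{\tau=0}^{T+1}x(\tau)^2-\gamma^2\sum_{\tau=0}^{T}w(\tau)^2-\gamma^2\sum_{\tau=0}^{T+1}v(\tau)^2-Px(0)^2\le 0. \]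
   Context: Set $\hat a=\frac{aP}{P+\gamma^2-1}$ and $\hat g=\frac{\gamma^2a}{P+\gamma^2-1}$. For $i\in\{-1,1\}$ the controller runs observers $\hat x_i(t+1)=\hat a\hat x_i(t)+iu(t)+\hat gy(t)$, $\hat x_i(0)=0$, and cumulative costs $l_i(t+1)=l_i(t)-P\hat x_i(t)^2-\gamma^2y(t)^2+\frac{(P\hat x_i(t)+\gamma^2y(t))^2}{P+\gamma^2-1}$, $l_i(0)=0$ (note $l_i(t+1)$ depends only on $\hat x_i(t)$ and $y(t)$). The certainty-equivalence dead-beat controller is \[ u(t)=\begin{cases}-(\hat a\hat x_1(t)+\hat gy(t)) & \text{if } l_1(t+1)\ge l_{-1}(t+1),\\ \hat a\hat x_{-1}(t)+\hat gy(t) & \text{if } l_1(t+1)<l_{-1}(t+1).\end{cases} \] *)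

theory Defs
  imports Complex_Main
begin

definition ahat :: "real \<Rightarrow> real \<Rightarrow> real \<Rightarrow> real" where
  "ahat a \<gamma> P = a * P / (P + \<gamma>^2 - 1)"

definition ghat :: "real \<Rightarrow> real \<Rightarrow> real \<Rightarrow> real" where
  "ghat a \<gamma> P = \<gamma>^2 * a / (P + \<gamma>^2 - 1)"

definition lupd :: "real \<Rightarrow> real \<Rightarrow> real \<Rightarrow> real \<Rightarrow> real \<Rightarrow> real" where
  "lupd \<gamma> P l xh y = l - P * xh^2 - \<gamma>^2 * y^2 + (P * xh + \<gamma>^2 * y)^2 / (P + \<gamma>^2 - 1)"

text \<open>Closed-loop state at time t: (x(t), xhat_1(t), xhat_{-1}(t), l_1(t), l_{-1}(t)).\<close>
fun closed_loop :: "real \<Rightarrow> real \<Rightarrow> real \<Rightarrow> real \<Rightarrow> (nat \<Rightarrow> real) \<Rightarrow> (nat \<Rightarrow> real) \<Rightarrow> real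
    \<Rightarrow> nat \<Rightarrow> real \<times> real \<times> real \<times> real \<times> real" where
  "closed_loop a \<gamma> P b w v x0 0 = (x0, 0, 0, 0, 0)"
| "closed_loop a \<gamma> P b w v x0 (Suc t) =
     (case closed_loop a \<gamma> P b w v x0 t of (x, xh1, xhm, l1, lm) \<Rightarrow>
       (let y = x + v t;
            l1' = lupd \<gamma> P l1 xh1 y;
            lm' = lupd \<gamma> P lm xhm y;
            u = (if l1' \<ge> lm' then - (ahat a \<gamma> P * xh1 + ghat a \<gamma> P * y)
                 else ahat a \<gamma> P * xhm + ghat a \<gamma> P * y)
        in (a * x + b * u + w t,
            ahat a \<gamma> P * xh1 + u + ghat a \<gamma> P * y,
            ahat a \<gamma> P * xhm - u + ghat a \<gamma> P * y,
            l1', lm')))"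

definition cl_x :: "real \<Rightarrow> real \<Rightarrow> real \<Rightarrow> real \<Rightarrow> (nat \<Rightarrow> real) \<Rightarrow> (nat \<Rightarrow> real) \<Rightarrow> real
    \<Rightarrow> nat \<Rightarrow> real" where
  "cl_x a \<gamma> P b w v x0 t = fst (closed_loop a \<gamma> P b w v x0 t)"

end

theory Submission
  imports Defs
begin

text \<open>
  Let b be the true sign of the input gain. The observer with index b sees the plant exactly,
  so its error x - xhat_b does not depend on u, and V = P (x - xhat_b)^2 - l_b is a storage
  function: the Riccati equation for P gives V(t+1) - V(t) <= gamma^2 (w^2 + v^2) - x^2.
  Summing, the gain bound reduces to x^2 <= V at the final time, which follows from the
  invariant l_i + P/(P-1) xhat_i^2 <= 0. The dead-beat controller preserves this invariant:
  one observer is always zero, the controller zeroes the one with the larger cost and the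
  other one absorbs its prediction; the curvature and strong negativity conditions, in the
  form 2 sqrt(gamma^2 - P) (P + gamma^2 - 1) <= gamma^2 (P - 1), guarantee that one of the
  two possible merges keeps the cost nonpositive.
\<close>

lemma lupd_denominator_eq:
  fixes \<gamma> P l h y :: real
  assumes "P + \<gamma>^2 - 1 \<noteq> 0"
  shows "(P + \<gamma>^2 - 1) * (lupd \<gamma> P l h y - l + P * h^2 + \<gamma>^2 * y^2) = (P * h + \<gamma>^2 * y)^2"
  using assms unfolding lupd_def by (simp add: field_simps)

lemma lupd_le:
  fixes \<gamma> P l h y :: real
  assumes "P > 1"
  shows "lupd \<gamma> P l h y \<le> l + P / (P - 1) * h^2"
proof -
  define S where "S = P + \<gamma>^2 - 1"
  have "S > 0" using assms zero_le_power2[of \<gamma>] unfolding S_def by linarith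
  have "S * (lupd \<gamma> P l h y - l + P * h^2 + \<gamma>^2 * y^2) = (P * h + \<gamma>^2 * y)^2"
       "(P - 1) * (P / (P - 1)) = P"
    using lupd_denominator_eq[of P \<gamma>] assms \<open>S > 0\<close> unfolding S_def by auto
  then have "(P - 1) * S * (l + P / (P - 1) * h^2 - lupd \<gamma> P l h y) = \<gamma>^2 * ((P - 1) * y - P * h)^2"
    unfolding S_def by algebra
  moreover have "(P - 1) * S > 0" using assms \<open>S > 0\<close> by simp
  ultimately show ?thesis
    by (metis diff_ge_0_iff_ge zero_le_mult_iff zero_le_power2 linorder_not_le)
qed

lemma sq_le_weighted_sq_diff:
  fixes P x h :: real
  assumes "P > 1"
  shows "x^2 \<le> P * (x - h)^2 + P / (P - 1) * h^2"
proof -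
  have "(P - 1) * (P * (x - h)^2 + P / (P - 1) * h^2 - x^2) = ((P - 1) * x - P * h)^2"
    using assms by (simp add: field_simps power2_eq_square)
  then show ?thesis
    using assms by (metis diff_ge_0_iff_ge zero_le_mult_iff zero_le_power2 linorder_not_le diff_gt_0_iff_gt)
qed

lemma abs_le_either:
  fixes s k G u z1 z2 :: real
  assumes "u = k * z1 - z2" and "k \<ge> 0" and "s \<ge> 0" and "(1 + k) * s \<le> G"
  shows "s * \<bar>u\<bar> \<le> G * \<bar>z1\<bar> \<or> s * \<bar>u\<bar> \<le> G * \<bar>z2\<bar>"
proof (rule ccontr)
  assume "\<not> ?thesis"
  then have z1: "G * \<bar>z1\<bar> < s * \<bar>u\<bar>" and z2: "G * \<bar>z2\<bar> < s * \<bar>u\<bar>" by auto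
  have "G \<ge> 0" using assms by (smt (verit) mult_nonneg_nonneg)
  have "G * \<bar>u\<bar> \<le> k * (G * \<bar>z1\<bar>) + G * \<bar>z2\<bar>"
    using mult_left_mono[OF abs_triangle_ineq4[of "k * z1" z2] \<open>G \<ge> 0\<close>] assms(2)
    by (simp add: assms(1) abs_mult algebra_simps)
  also have "\<dots> < (1 + k) * s * \<bar>u\<bar>"
    using mult_left_mono[OF less_imp_le[OF z1] assms(2)] z2 by (simp add: algebra_simps)
  also have "\<dots> \<le> G * \<bar>u\<bar>"
    using mult_right_mono[OF assms(4), of "\<bar>u\<bar>"] by simp
  finally show False by simp
qed

lemma riccati_of_positive_root:
  fixes a \<gamma> P :: real
  assumes P_def: "P = (1 - \<gamma>^2 * a^2) / 2 + sqrt (\<gamma>^2 * (-1 + \<gamma>^2) + (\<gamma>^2 * a^2 - 1)^2 / 4)"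
    and "P > 1"
  shows "P * \<gamma>^2 * a^2 = (\<gamma>^2 - P) * (P + \<gamma>^2 - 1)"
proof -
  define R where "R = \<gamma>^2 * (-1 + \<gamma>^2) + (\<gamma>^2 * a^2 - 1)^2 / 4"
  have root: "2 * sqrt R = 2 * P - 1 + \<gamma>^2 * a^2" using P_def unfolding R_def by (simp add: field_simps)
  have "0 \<le> \<gamma>^2 * a^2" by simp
  with root \<open>P > 1\<close> have "sqrt R > 0" by linarith
  then have "(2 * sqrt R)^2 = 4 * R" by (simp add: power_mult_distrib)
  with root have "(2 * P - 1 + \<gamma>^2 * a^2)^2 = 4 * R" by simp
  then show ?thesis unfolding R_def by algebra
qed

fun storage :: "real \<Rightarrow> real \<Rightarrow> real \<times> real \<times> real \<times> real \<times> real \<Rightarrow> real" where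
  "storage P b (x, h1, hm, l1, lm) = (if b = 1 then P * (x - h1)^2 - l1 else P * (x - hm)^2 - lm)"

fun deadbeat_invariant :: "real \<Rightarrow> real \<times> real \<times> real \<times> real \<times> real \<Rightarrow> bool" where
  "deadbeat_invariant P (x, h1, hm, l1, lm) \<longleftrightarrow>
     l1 + P / (P - 1) * h1^2 \<le> 0 \<and> lm + P / (P - 1) * hm^2 \<le> 0 \<and> (h1 = 0 \<or> hm = 0)"

lemma sq_le_storage:
  assumes "P > 1" and "deadbeat_invariant P s"
  shows "(fst s)^2 \<le> storage P b s"
proof -
  obtain x h1 hm l1 lm where s: "s = (x, h1, hm, l1, lm)" by (metis prod_cases5)
  show ?thesis
    using assms sq_le_weighted_sq_diff[OF assms(1), of x h1] sq_le_weighted_sq_diff[OF assms(1), of x hm]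
    unfolding s by auto
qed

lemma closed_loop_Suc_eq:
  assumes "closed_loop a \<gamma> P b w v x0 t = (x, h1, hm, l1, lm)"
  defines "y \<equiv> x + v t"
  defines "U \<equiv> (if lupd \<gamma> P l1 h1 y \<ge> lupd \<gamma> P lm hm y then - (ahat a \<gamma> P * h1 + ghat a \<gamma> P * y)
                 else ahat a \<gamma> P * hm + ghat a \<gamma> P * y)"
  shows "closed_loop a \<gamma> P b w v x0 (Suc t) =
           (a * x + b * U + w t, ahat a \<gamma> P * h1 + U + ghat a \<gamma> P * y,
            ahat a \<gamma> P * hm - U + ghat a \<gamma> P * y, lupd \<gamma> P l1 h1 y, lupd \<gamma> P lm hm y)"
  using assms(1) unfolding U_def y_def by (simp add: Let_def)

locale riccati_solution =
  fixes a \<gamma> P :: real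
  assumes gamma_pos: "\<gamma> > 0"
    and P_gt_1: "P > 1"
    and riccati: "P * \<gamma>^2 * a^2 = (\<gamma>^2 - P) * (P + \<gamma>^2 - 1)"
begin

lemma denominator_pos: "P + \<gamma>^2 - 1 > 0"
  using P_gt_1 zero_le_power2[of \<gamma>] by linarith

lemma observer_gain_eq:
  "(P + \<gamma>^2 - 1) * (ahat a \<gamma> P * h + ghat a \<gamma> P * y) = a * (P * h + \<gamma>^2 * y)"
  using denominator_pos unfolding ahat_def ghat_def by (simp add: distrib_left)

lemma P_le_gamma_sq: "P \<le> \<gamma>^2"
proof -
  have "(\<gamma>^2 - P) * (P + \<gamma>^2 - 1) \<ge> 0"
    unfolding riccati[symmetric] using P_gt_1 by simp
  then show ?thesis using denominator_pos by (simp add: zero_le_mult_iff)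
qed

text \<open>Maximising over w completes a square whose discriminant vanishes by the Riccati equation.\<close>

lemma dissipation_step:
  fixes x h w v l :: real
  shows "x^2 + P * (a * x + w - ahat a \<gamma> P * h - ghat a \<gamma> P * (x + v))^2
         \<le> P * (x - h)^2 + \<gamma>^2 * w^2 + \<gamma>^2 * v^2 + lupd \<gamma> P l h (x + v) - l"
proof -
  define S where "S = P + \<gamma>^2 - 1"
  define y where "y = x + v"
  define A where "A = ahat a \<gamma> P * h + ghat a \<gamma> P * y"
  define L where "L = lupd \<gamma> P l h y"
  define Z where "Z = x^2 + P * (a * x + w - A)^2 - (P * (x - h)^2 + \<gamma>^2 * w^2 + \<gamma>^2 * (y - x)^2 + L - l)"
  have "S * A = a * (P * h + \<gamma>^2 * y)" "S * (L - l + P * h^2 + \<gamma>^2 * y^2) = (P * h + \<gamma>^2 * y)^2"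
    using observer_gain_eq lupd_denominator_eq denominator_pos unfolding S_def A_def L_def by simp_all
  then have "S * (S * (\<gamma>^2 * Z)) = - P * S * (S * x - P * h - \<gamma>^2 * y - \<gamma>^2 * a * w)^2"
    using riccati unfolding Z_def S_def by algebra
  also have "\<dots> \<le> 0"
    using P_gt_1 denominator_pos unfolding S_def by simp
  finally have "Z \<le> 0"
    using denominator_pos gamma_pos unfolding S_def by (simp add: mult_le_0_iff)
  then show ?thesis unfolding Z_def A_def L_def y_def by (simp add: algebra_simps)
qed

lemma storage_step:
  assumes "b \<in> {-1, 1}"
  shows "storage P b (closed_loop a \<gamma> P b w v x0 (Suc t)) + (cl_x a \<gamma> P b w v x0 t)^2
         \<le> storage P b (closed_loop a \<gamma> P b w v x0 t) + \<gamma>^2 * (w t)^2 + \<gamma>^2 * (v t)^2"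
proof -
  obtain x h1 hm l1 lm where s: "closed_loop a \<gamma> P b w v x0 t = (x, h1, hm, l1, lm)"
    by (metis prod_cases5)
  define y where "y = x + v t"
  obtain U where s': "closed_loop a \<gamma> P b w v x0 (Suc t) =
      (a * x + b * U + w t, ahat a \<gamma> P * h1 + U + ghat a \<gamma> P * y,
       ahat a \<gamma> P * hm - U + ghat a \<gamma> P * y, lupd \<gamma> P l1 h1 y, lupd \<gamma> P lm hm y)"
    using closed_loop_Suc_eq[OF s] unfolding y_def by blast
  have x: "cl_x a \<gamma> P b w v x0 t = x" by (simp add: cl_x_def s)
  from assms consider "b = 1" | "b = -1" by auto
  then show ?thesis
  proof cases
    case 1
    then have "storage P b (closed_loop a \<gamma> P b w v x0 (Suc t))
               = P * (a * x + w t - ahat a \<gamma> P * h1 - ghat a \<gamma> P * y)^2 - lupd \<gamma> P l1 h1 y"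
      unfolding s' by (simp add: algebra_simps)
    moreover have "storage P b (closed_loop a \<gamma> P b w v x0 t) = P * (x - h1)^2 - l1"
      unfolding s using 1 by simp
    ultimately show ?thesis
      using dissipation_step[of x "w t" h1 "v t" l1] unfolding x y_def by linarith
  next
    case 2
    then have "storage P b (closed_loop a \<gamma> P b w v x0 (Suc t))
               = P * (a * x + w t - ahat a \<gamma> P * hm - ghat a \<gamma> P * y)^2 - lupd \<gamma> P lm hm y"
      unfolding s' by (simp add: algebra_simps)
    moreover have "storage P b (closed_loop a \<gamma> P b w v x0 t) = P * (x - hm)^2 - lm"
      unfolding s using 2 by simp
    ultimately show ?thesis
      using dissipation_step[of x "w t" hm "v t" lm] unfolding x y_def by linarith
  qed
qed

lemma storage_bound:
  assumes "b \<in> {-1, 1}"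
  shows "storage P b (closed_loop a \<gamma> P b w v x0 t)
           + (\<Sum>\<tau><t. (cl_x a \<gamma> P b w v x0 \<tau>)^2 - \<gamma>^2 * (w \<tau>)^2 - \<gamma>^2 * (v \<tau>)^2) \<le> P * x0^2"
proof (induction t)
  case 0
  then show ?case by simp
next
  case (Suc t)
  then show ?case using storage_step[OF assms, of w v x0 t] by simp
qed

lemma merge_into_zero_observer_eq:
  "(P + \<gamma>^2 - 1) * (P - 1) * \<gamma>^2 *
     (lupd \<gamma> P l 0 y - l + P / (P - 1) * (ahat a \<gamma> P * e + 2 * ghat a \<gamma> P * y)^2)
   = (\<gamma>^2 - P) * (P * e + 2 * \<gamma>^2 * y)^2 - (\<gamma>^2)^2 * ((P - 1) * y)^2"
proof -
  define S where "S = P + \<gamma>^2 - 1"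
  define c where "c = P / (P - 1)"
  define F where "F = ahat a \<gamma> P * e + 2 * ghat a \<gamma> P * y"
  define L where "L = lupd \<gamma> P l 0 y"
  have "S * F = a * (P * e + 2 * \<gamma>^2 * y)"
    using observer_gain_eq[of e "2 * y"] unfolding S_def F_def by (simp add: algebra_simps)
  moreover have "S * (L - l + \<gamma>^2 * y^2) = (\<gamma>^2 * y)^2"
    using lupd_denominator_eq[of P \<gamma> l 0 y] denominator_pos unfolding S_def L_def by simp
  moreover have "(P - 1) * c = P" using P_gt_1 unfolding c_def by simp
  ultimately have "S * (S * (P - 1) * \<gamma>^2 * (L - l + c * F^2))
             = S * ((\<gamma>^2 - P) * (P * e + 2 * \<gamma>^2 * y)^2 - (\<gamma>^2)^2 * ((P - 1) * y)^2)"
    using riccati unfolding S_def by algebra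
  then show ?thesis using denominator_pos unfolding S_def F_def L_def c_def by simp
qed

lemma merge_into_active_observer_eq:
  "(P + \<gamma>^2 - 1) * (P - 1) * \<gamma>^2 *
     (lupd \<gamma> P l e y - l - P / (P - 1) * e^2 + P / (P - 1) * (ahat a \<gamma> P * e + 2 * ghat a \<gamma> P * y)^2)
   = (\<gamma>^2 - P) * (P * e + 2 * \<gamma>^2 * y)^2 - (\<gamma>^2)^2 * ((P - 1) * y - P * e)^2"
proof -
  define S where "S = P + \<gamma>^2 - 1"
  define c where "c = P / (P - 1)"
  define F where "F = ahat a \<gamma> P * e + 2 * ghat a \<gamma> P * y"
  define L where "L = lupd \<gamma> P l e y"
  have "S * F = a * (P * e + 2 * \<gamma>^2 * y)"
    using observer_gain_eq[of e "2 * y"] unfolding S_def F_def by (simp add: algebra_simps)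
  moreover have "S * (L - l + P * e^2 + \<gamma>^2 * y^2) = (P * e + \<gamma>^2 * y)^2"
    using lupd_denominator_eq[of P \<gamma> l e y] denominator_pos unfolding S_def L_def by simp
  moreover have "(P - 1) * c = P" using P_gt_1 unfolding c_def by simp
  ultimately have "S * (S * (P - 1) * \<gamma>^2 * (L - l - c * e^2 + c * F^2))
             = S * ((\<gamma>^2 - P) * (P * e + 2 * \<gamma>^2 * y)^2 - (\<gamma>^2)^2 * ((P - 1) * y - P * e)^2)"
    using riccati unfolding S_def by algebra
  then show ?thesis using denominator_pos unfolding S_def F_def L_def c_def by simp
qed

end

locale riccati_margin = riccati_solution +
  assumes margin: "2 * sqrt (\<gamma>^2 - P) * (P + \<gamma>^2 - 1) \<le> \<gamma>^2 * (P - 1)"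

lemma (in riccati_solution) riccati_margin_of_strong_negativity:
  assumes curv: "P > 2 * \<gamma> - 1"
    and strong_neg: "(P + 2 * \<gamma>^2 - 1) * (P - 1 - 2 * sqrt (\<gamma>^2 - P))^2
                       \<ge> (P - 1) * ((P + 1)^2 - 4 * \<gamma>^2)"
  shows "riccati_margin a \<gamma> P"
proof unfold_locales
  define s where "s = sqrt (\<gamma>^2 - P)"
  have "s \<ge> 0" and s_sq: "s^2 = \<gamma>^2 - P" using P_le_gamma_sq unfolding s_def by auto
  have "(2 * \<gamma>)^2 < (P + 1)^2" using curv gamma_pos by (intro power_strict_mono) auto
  moreover have "(P - 1)^2 - (2 * s)^2 = (P + 1)^2 - (2 * \<gamma>)^2" using s_sq by algebra
  ultimately have "(2 * s)^2 < (P - 1)^2" by linarith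
  then have "2 * s < P - 1" by (rule power2_less_imp_less) (use P_gt_1 in simp)
  have "(P + 2 * \<gamma>^2 - 1) * (P - 1 - 2 * s)^2 - (P - 1) * ((P + 1)^2 - 4 * \<gamma>^2)
        = 2 * (P - 1 - 2 * s) * (\<gamma>^2 * (P - 1) - 2 * s * (P + \<gamma>^2 - 1))"
    using s_sq by algebra
  with strong_neg have "(P - 1 - 2 * s) * (\<gamma>^2 * (P - 1) - 2 * s * (P + \<gamma>^2 - 1)) \<ge> 0"
    unfolding s_def[symmetric] by linarith
  with \<open>2 * s < P - 1\<close> have "2 * s * (P + \<gamma>^2 - 1) \<le> \<gamma>^2 * (P - 1)"
    by (simp add: zero_le_mult_iff)
  then show "2 * sqrt (\<gamma>^2 - P) * (P + \<gamma>^2 - 1) \<le> \<gamma>^2 * (P - 1)"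
    unfolding s_def .
qed

context riccati_margin
begin

text \<open>
  The observers are in states 0 and e with costs lj and lk; after the dead-beat step the
  surviving observer is in state ahat e + 2 ghat y.
\<close>

lemma merged_observer_cost:
  fixes lj lk e y :: real
  assumes "lj \<le> 0" and "lk + P / (P - 1) * e^2 \<le> 0"
  shows "min (lupd \<gamma> P lj 0 y) (lupd \<gamma> P lk e y)
           + P / (P - 1) * (ahat a \<gamma> P * e + 2 * ghat a \<gamma> P * y)^2 \<le> 0"
proof -
  define G where "G = \<gamma>^2"
  define s where "s = sqrt (G - P)"
  define u where "u = P * e + 2 * G * y"
  define c where "c = P / (P - 1)"
  define F where "F = ahat a \<gamma> P * e + 2 * ghat a \<gamma> P * y"
  define K where "K = (P + \<gamma>^2 - 1) * (P - 1) * \<gamma>^2"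
  have "K > 0" using denominator_pos P_gt_1 gamma_pos unfolding K_def by simp
  have "G > 0" and "s \<ge> 0" and s_sq: "s^2 = G - P"
    using gamma_pos P_le_gamma_sq unfolding G_def s_def by auto
  have "s * \<bar>u\<bar> \<le> G * \<bar>(P - 1) * y\<bar> \<or> s * \<bar>u\<bar> \<le> G * \<bar>(P - 1) * y - P * e\<bar>"
  proof (rule abs_le_either)
    show "u = (P + 2 * G - 1) / (P - 1) * ((P - 1) * y) - ((P - 1) * y - P * e)"
      using P_gt_1 unfolding u_def by (simp add: field_simps)
    show "(1 + (P + 2 * G - 1) / (P - 1)) * s \<le> G"
      using margin P_gt_1 unfolding s_def G_def by (simp add: field_simps)
  qed (use P_gt_1 \<open>G > 0\<close> \<open>s \<ge> 0\<close> in auto)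
  then have "(s * u)^2 \<le> (G * ((P - 1) * y))^2 \<or> (s * u)^2 \<le> (G * ((P - 1) * y - P * e))^2"
    using \<open>s \<ge> 0\<close> \<open>G > 0\<close> by (simp add: abs_le_square_iff[symmetric] abs_mult)
  then have "(G - P) * u^2 - G^2 * ((P - 1) * y)^2 \<le> 0
             \<or> (G - P) * u^2 - G^2 * ((P - 1) * y - P * e)^2 \<le> 0"
    by (simp add: power_mult_distrib s_sq)
  then have "K * (lupd \<gamma> P lj 0 y - lj + c * F^2) \<le> 0
             \<or> K * (lupd \<gamma> P lk e y - lk - c * e^2 + c * F^2) \<le> 0"
    using merge_into_zero_observer_eq[of lj y e] merge_into_active_observer_eq[of lk e y]
    unfolding K_def c_def F_def u_def G_def by simp
  then have "lupd \<gamma> P lj 0 y - lj + c * F^2 \<le> 0 \<or> lupd \<gamma> P lk e y - lk - c * e^2 + c * F^2 \<le> 0"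
    using \<open>K > 0\<close> by (meson mult_pos_pos not_le)
  then show ?thesis using assms unfolding c_def F_def by linarith
qed

lemma deadbeat_invariant_step:
  assumes s: "closed_loop a \<gamma> P b w v x0 t = (x, h1, hm, l1, lm)"
    and inv: "deadbeat_invariant P (x, h1, hm, l1, lm)"
  shows "deadbeat_invariant P (closed_loop a \<gamma> P b w v x0 (Suc t))"
proof -
  define y where "y = x + v t"
  define L1 where "L1 = lupd \<gamma> P l1 h1 y"
  define Lm where "Lm = lupd \<gamma> P lm hm y"
  define F where "F = ahat a \<gamma> P * (h1 + hm) + 2 * ghat a \<gamma> P * y"
  have h1: "l1 + P / (P - 1) * h1^2 \<le> 0" and hm: "lm + P / (P - 1) * hm^2 \<le> 0"
    and zero: "h1 = 0 \<or> hm = 0"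
    using inv by simp_all
  have "L1 \<le> 0" "Lm \<le> 0"
    using lupd_le[OF P_gt_1, of \<gamma> l1 h1 y] lupd_le[OF P_gt_1, of \<gamma> lm hm y] h1 hm
    unfolding L1_def Lm_def by linarith+
  have merged: "min L1 Lm + P / (P - 1) * F^2 \<le> 0"
    using zero
  proof
    assume "h1 = 0"
    then show ?thesis
      using merged_observer_cost[of l1 lm hm y] h1 hm unfolding L1_def Lm_def F_def by simp
  next
    assume "hm = 0"
    then show ?thesis
      using merged_observer_cost[of lm l1 h1 y] h1 hm unfolding L1_def Lm_def F_def
      by (simp add: min.commute)
  qed
  have step: "closed_loop a \<gamma> P b w v x0 (Suc t) =
      (a * x + b * (if L1 \<ge> Lm then - (ahat a \<gamma> P * h1 + ghat a \<gamma> P * y)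
                    else ahat a \<gamma> P * hm + ghat a \<gamma> P * y) + w t,
       ahat a \<gamma> P * h1 + (if L1 \<ge> Lm then - (ahat a \<gamma> P * h1 + ghat a \<gamma> P * y)
                    else ahat a \<gamma> P * hm + ghat a \<gamma> P * y) + ghat a \<gamma> P * y,
       ahat a \<gamma> P * hm - (if L1 \<ge> Lm then - (ahat a \<gamma> P * h1 + ghat a \<gamma> P * y)
                    else ahat a \<gamma> P * hm + ghat a \<gamma> P * y) + ghat a \<gamma> P * y, L1, Lm)"
    unfolding closed_loop_Suc_eq[OF s] L1_def Lm_def y_def ..
  show ?thesis
  proof (cases "L1 \<ge> Lm")
    case True
    have "ahat a \<gamma> P * hm + (ahat a \<gamma> P * h1 + ghat a \<gamma> P * y) + ghat a \<gamma> P * y = F"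
      unfolding F_def by (simp add: algebra_simps)
    then show ?thesis unfolding step using True \<open>L1 \<le> 0\<close> merged by simp
  next
    case False
    have "ahat a \<gamma> P * h1 + (ahat a \<gamma> P * hm + ghat a \<gamma> P * y) + ghat a \<gamma> P * y = F"
      unfolding F_def by (simp add: algebra_simps)
    then show ?thesis unfolding step using False \<open>Lm \<le> 0\<close> merged by simp
  qed
qed

lemma deadbeat_invariant_closed_loop: "deadbeat_invariant P (closed_loop a \<gamma> P b w v x0 t)"
proof (induction t)
  case 0
  then show ?case by simp
next
  case (Suc t)
  obtain x h1 hm l1 lm where "closed_loop a \<gamma> P b w v x0 t = (x, h1, hm, l1, lm)"
    by (metis prod_cases5)
  with Suc.IH show ?case using deadbeat_invariant_step by simp
qed

end

theorem theorem6:
  fixes a \<gamma> P b x0 :: real and w v :: "nat \<Rightarrow> real" and T :: nat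
  assumes g_pos: "\<gamma> > 0"
    and P_def: "P = (1 - \<gamma>^2 * a^2) / 2 + sqrt (\<gamma>^2 * (-1 + \<gamma>^2) + (\<gamma>^2 * a^2 - 1)^2 / 4)"
    and P_gt1: "P > 1"
    and curv: "P > 2 * \<gamma> - 1"
    and strong_neg: "(P + 2 * \<gamma>^2 - 1) * (P - 1 - 2 * sqrt (\<gamma>^2 - P))^2
                       \<ge> (P - 1) * ((P + 1)^2 - 4 * \<gamma>^2)"
    and b: "b \<in> {-1, 1}"
  shows "(\<Sum>\<tau>\<in>{0..T+1}. (cl_x a \<gamma> P b w v x0 \<tau>)^2)
         - \<gamma>^2 * (\<Sum>\<tau>\<in>{0..T}. (w \<tau>)^2)
         - \<gamma>^2 * (\<Sum>\<tau>\<in>{0..T+1}. (v \<tau>)^2)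
         - P * (cl_x a \<gamma> P b w v x0 0)^2 \<le> 0"
proof -
  interpret riccati_solution a \<gamma> P
    using g_pos P_gt1 riccati_of_positive_root[OF P_def P_gt1] by unfold_locales
  interpret riccati_margin a \<gamma> P
    by (rule riccati_margin_of_strong_negativity[OF curv strong_neg])
  let ?x = "cl_x a \<gamma> P b w v x0"
  let ?s = "closed_loop a \<gamma> P b w v x0 (T + 1)"
  have x0: "?x 0 = x0" by (simp add: cl_x_def)
  have "(?x (T + 1))^2 \<le> storage P b ?s"
    unfolding cl_x_def by (rule sq_le_storage[OF P_gt1 deadbeat_invariant_closed_loop])
  moreover have "storage P b ?s + (\<Sum>\<tau><T + 1. (?x \<tau>)^2 - \<gamma>^2 * (w \<tau>)^2 - \<gamma>^2 * (v \<tau>)^2) \<le> P * x0^2"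
    by (rule storage_bound[OF b])
  moreover have "(\<Sum>\<tau>\<in>{0..T+1}. (?x \<tau>)^2) - \<gamma>^2 * (\<Sum>\<tau>\<in>{0..T}. (w \<tau>)^2) - \<gamma>^2 * (\<Sum>\<tau>\<in>{0..T+1}. (v \<tau>)^2)
      = (\<Sum>\<tau><T + 1. (?x \<tau>)^2 - \<gamma>^2 * (w \<tau>)^2 - \<gamma>^2 * (v \<tau>)^2) + (?x (T + 1))^2 - \<gamma>^2 * (v (T + 1))^2"
  proof -
    have "{0..T + 1} = {..<T + 2}" and "{0..T} = {..<T + 1}" by auto
    then show ?thesis by (simp add: sum_subtractf sum_distrib_left ring_distribs)
  qed
  moreover have "\<gamma>^2 * (v (T + 1))^2 \<ge> 0" by simp
  ultimately show ?thesis unfolding x0 by linarith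
qed

end
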